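(* Let $(\mathcal A;\mathcal E)$ be an exact category and let $\mathcal J_1,\mathcal J_2$ be ideals of $\mathcal A$. If $\mathcal J_1$ and $\mathcal J_2$ are monic preenveloping, then so are $\mathcal J_1\cap\mathcal J_2$ and $\mathcal J_1+\mathcal J_2$. Dually, if $\mathcal J_1$ and $\mathcal J_2$ are epic precovering, then so are $\mathcal J_1\cap\mathcal J_2$ and $\mathcal J_1+\mathcal J_2$.
   Context: An exact category $(\mathcal A;\mathcal E)$ (in the sense of Quillen/Keller/Bühler) is an additive category $\mathcal A$ with a class $\mathcal E$ of kernel–cokernel pairs $B\xrightarrow{m}C\xrightarrow{p}A$, called conflations ($m$ an inflation, $p$ a deflation), closed under isomorphism, containing identities as inflations/deflations, with inflations and deflations closed under composition, and with pushouts of inflations along arbitrary morphisms existing and being inflations (dually for pullbacks of deflations). An ideal $\mathcal J$ of $\mathcal A$ is a family of subgroups $\mathcal J(A,B)\subseteq\mathrm{Hom}(A,B)$ closed under composition on either side with arbitrary morphisms; $\mathcal J_1\cap\mathcal J_2$ and $\mathcal J_1+\mathcal J_2$ are formed objectwise. $\mathcal J$ is preenveloping if every object $B$ has a $\mathcal J$-preenvelope: a morphism $j:B\to J$ in $\mathcal J$ through which every morphism in $\mathcal J$ with domain $B$ factors. $\mathcal J$ is monic preenveloping if every object $B$ admits a $\mathcal J$-preenvelope that is an inflation. Dually, $\mathcal I$ is epic precovering if every object admits an $\mathcal I$-precover (a morphism in $\mathcal I$ into it through which every morphism of $\mathcal I$ into it factors) that is a deflation. *)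

theory Defs
  imports Main
begin

text \<open>A (small) category whose morphisms carry their domain and codomain,
together with a group structure on each hom-set (for preadditive/additive
categories). Composition is written Cmp C g f = g after f.\<close>

record ('o, 'm) cat =
  Ob   :: "'o set"
  Ar   :: "'m set"
  Dom  :: "'m \<Rightarrow> 'o"
  Cod  :: "'m \<Rightarrow> 'o"
  Cmp  :: "'m \<Rightarrow> 'm \<Rightarrow> 'm"
  Idm  :: "'o \<Rightarrow> 'm"
  Add  :: "'m \<Rightarrow> 'm \<Rightarrow> 'm"
  Zero :: "'o \<Rightarrow> 'o \<Rightarrow> 'm"

definition hom :: "('o,'m) cat \<Rightarrow> 'o \<Rightarrow> 'o \<Rightarrow> 'm set" where
  "hom C A B = {f \<in> Ar C. Dom C f = A \<and> Cod C f = B}"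

definition category :: "('o,'m) cat \<Rightarrow> bool" where
  "category C \<longleftrightarrow>
     (\<forall>f\<in>Ar C. Dom C f \<in> Ob C \<and> Cod C f \<in> Ob C) \<and>
     (\<forall>A\<in>Ob C. Idm C A \<in> hom C A A) \<and>
     (\<forall>f\<in>Ar C. \<forall>g\<in>Ar C. Cod C f = Dom C g \<longrightarrow> Cmp C g f \<in> hom C (Dom C f) (Cod C g)) \<and>
     (\<forall>f\<in>Ar C. \<forall>g\<in>Ar C. \<forall>h\<in>Ar C. Cod C f = Dom C g \<and> Cod C g = Dom C h \<longrightarrow>
         Cmp C h (Cmp C g f) = Cmp C (Cmp C h g) f) \<and>
     (\<forall>f\<in>Ar C. Cmp C (Idm C (Cod C f)) f = f \<and> Cmp C f (Idm C (Dom C f)) = f)"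

definition preadditive :: "('o,'m) cat \<Rightarrow> bool" where
  "preadditive C \<longleftrightarrow> category C \<and>
     (\<forall>A\<in>Ob C. \<forall>B\<in>Ob C.
        Zero C A B \<in> hom C A B \<and>
        (\<forall>f\<in>hom C A B. \<forall>g\<in>hom C A B. Add C f g \<in> hom C A B) \<and>
        (\<forall>f\<in>hom C A B. \<forall>g\<in>hom C A B. \<forall>h\<in>hom C A B. Add C (Add C f g) h = Add C f (Add C g h)) \<and>
        (\<forall>f\<in>hom C A B. \<forall>g\<in>hom C A B. Add C f g = Add C g f) \<and>
        (\<forall>f\<in>hom C A B. Add C f (Zero C A B) = f) \<and>
        (\<forall>f\<in>hom C A B. \<exists>g\<in>hom C A B. Add C f g = Zero C A B)) \<and>
     (\<forall>A\<in>Ob C. \<forall>B\<in>Ob C. \<forall>D\<in>Ob C.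
        (\<forall>f\<in>hom C A B. \<forall>g\<in>hom C B D. \<forall>g'\<in>hom C B D.
            Cmp C (Add C g g') f = Add C (Cmp C g f) (Cmp C g' f)) \<and>
        (\<forall>f\<in>hom C A B. \<forall>f'\<in>hom C A B. \<forall>g\<in>hom C B D.
            Cmp C g (Add C f f') = Add C (Cmp C g f) (Cmp C g f')))"

definition is_biproduct :: "('o,'m) cat \<Rightarrow> 'o \<Rightarrow> 'o \<Rightarrow> 'o \<Rightarrow> 'm \<Rightarrow> 'm \<Rightarrow> 'm \<Rightarrow> 'm \<Rightarrow> bool" where
  "is_biproduct C A B P i1 i2 p1 p2 \<longleftrightarrow>
     P \<in> Ob C \<and> i1 \<in> hom C A P \<and> i2 \<in> hom C B P \<and> p1 \<in> hom C P A \<and> p2 \<in> hom C P B \<and>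
     Cmp C p1 i1 = Idm C A \<and> Cmp C p2 i2 = Idm C B \<and>
     Cmp C p1 i2 = Zero C B A \<and> Cmp C p2 i1 = Zero C A B \<and>
     Add C (Cmp C i1 p1) (Cmp C i2 p2) = Idm C P"

definition additive :: "('o,'m) cat \<Rightarrow> bool" where
  "additive C \<longleftrightarrow> preadditive C \<and>
     (\<exists>Z\<in>Ob C. Idm C Z = Zero C Z Z) \<and>
     (\<forall>A\<in>Ob C. \<forall>B\<in>Ob C. \<exists>P i1 i2 p1 p2. is_biproduct C A B P i1 i2 p1 p2)"

definition is_kernel :: "('o,'m) cat \<Rightarrow> 'm \<Rightarrow> 'm \<Rightarrow> bool" where
  "is_kernel C m p \<longleftrightarrow> m \<in> Ar C \<and> p \<in> Ar C \<and> Cod C m = Dom C p \<and>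
     Cmp C p m = Zero C (Dom C m) (Cod C p) \<and>
     (\<forall>f\<in>Ar C. Cod C f = Dom C p \<and> Cmp C p f = Zero C (Dom C f) (Cod C p) \<longrightarrow>
        (\<exists>!g. g \<in> hom C (Dom C f) (Dom C m) \<and> Cmp C m g = f))"

definition is_cokernel :: "('o,'m) cat \<Rightarrow> 'm \<Rightarrow> 'm \<Rightarrow> bool" where
  "is_cokernel C p m \<longleftrightarrow> m \<in> Ar C \<and> p \<in> Ar C \<and> Cod C m = Dom C p \<and>
     Cmp C p m = Zero C (Dom C m) (Cod C p) \<and>
     (\<forall>f\<in>Ar C. Dom C f = Cod C m \<and> Cmp C f m = Zero C (Dom C m) (Cod C f) \<longrightarrow>
        (\<exists>!g. g \<in> hom C (Cod C p) (Cod C f) \<and> Cmp C g p = f))"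

definition kc_pair :: "('o,'m) cat \<Rightarrow> 'm \<Rightarrow> 'm \<Rightarrow> bool" where
  "kc_pair C m p \<longleftrightarrow> is_kernel C m p \<and> is_cokernel C p m"

definition iso :: "('o,'m) cat \<Rightarrow> 'm \<Rightarrow> bool" where
  "iso C f \<longleftrightarrow> f \<in> Ar C \<and> (\<exists>g\<in>hom C (Cod C f) (Dom C f).
     Cmp C g f = Idm C (Dom C f) \<and> Cmp C f g = Idm C (Cod C f))"

definition is_pushout :: "('o,'m) cat \<Rightarrow> 'm \<Rightarrow> 'm \<Rightarrow> 'm \<Rightarrow> 'm \<Rightarrow> bool" where
  "is_pushout C m f m' f' \<longleftrightarrow>
     m \<in> Ar C \<and> f \<in> Ar C \<and> m' \<in> Ar C \<and> f' \<in> Ar C \<and> Dom C m = Dom C f \<and>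
     Dom C m' = Cod C f \<and> Dom C f' = Cod C m \<and> Cod C m' = Cod C f' \<and>
     Cmp C f' m = Cmp C m' f \<and>
     (\<forall>g\<in>Ar C. \<forall>h\<in>Ar C. Dom C g = Cod C m \<and> Dom C h = Cod C f \<and> Cod C g = Cod C h \<and>
        Cmp C g m = Cmp C h f \<longrightarrow>
        (\<exists>!u. u \<in> hom C (Cod C f') (Cod C g) \<and> Cmp C u f' = g \<and> Cmp C u m' = h))"

definition is_pullback :: "('o,'m) cat \<Rightarrow> 'm \<Rightarrow> 'm \<Rightarrow> 'm \<Rightarrow> 'm \<Rightarrow> bool" where
  "is_pullback C p f p' f' \<longleftrightarrow>
     p \<in> Ar C \<and> f \<in> Ar C \<and> p' \<in> Ar C \<and> f' \<in> Ar C \<and> Cod C p = Cod C f \<and>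
     Cod C p' = Dom C f \<and> Cod C f' = Dom C p \<and> Dom C p' = Dom C f' \<and>
     Cmp C p f' = Cmp C f p' \<and>
     (\<forall>g\<in>Ar C. \<forall>h\<in>Ar C. Cod C g = Dom C p \<and> Cod C h = Dom C f \<and> Dom C g = Dom C h \<and>
        Cmp C p g = Cmp C f h \<longrightarrow>
        (\<exists>!u. u \<in> hom C (Dom C g) (Dom C f') \<and> Cmp C f' u = g \<and> Cmp C p' u = h))"

text \<open>A conflation is a pair (m, p) in E; m is an inflation, p a deflation.\<close>
definition inflation :: "('o,'m) cat \<Rightarrow> ('m \<times> 'm) set \<Rightarrow> 'm \<Rightarrow> bool" where
  "inflation C E m \<longleftrightarrow> (\<exists>p. (m, p) \<in> E)"

definition deflation :: "('o,'m) cat \<Rightarrow> ('m \<times> 'm) set \<Rightarrow> 'm \<Rightarrow> bool" where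
  "deflation C E p \<longleftrightarrow> (\<exists>m. (m, p) \<in> E)"

definition exact_category :: "('o,'m) cat \<Rightarrow> ('m \<times> 'm) set \<Rightarrow> bool" where
  "exact_category C E \<longleftrightarrow> additive C \<and>
     (\<forall>(m, p)\<in>E. kc_pair C m p) \<and>
     \<comment> \<open>closed under isomorphism of kernel-cokernel pairs\<close>
     (\<forall>(m, p)\<in>E. \<forall>m' p' a b c. kc_pair C m' p' \<and>
        iso C a \<and> iso C b \<and> iso C c \<and>
        a \<in> hom C (Dom C m) (Dom C m') \<and> b \<in> hom C (Cod C m) (Cod C m') \<and>
        c \<in> hom C (Cod C p) (Cod C p') \<and>
        Cmp C b m = Cmp C m' a \<and> Cmp C c p = Cmp C p' b \<longrightarrow> (m', p') \<in> E) \<and>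
     (\<forall>A\<in>Ob C. inflation C E (Idm C A) \<and> deflation C E (Idm C A)) \<and>
     (\<forall>m n. inflation C E m \<and> inflation C E n \<and> Cod C m = Dom C n \<longrightarrow> inflation C E (Cmp C n m)) \<and>
     (\<forall>p q. deflation C E p \<and> deflation C E q \<and> Cod C p = Dom C q \<longrightarrow> deflation C E (Cmp C q p)) \<and>
     (\<forall>m f. inflation C E m \<and> f \<in> Ar C \<and> Dom C f = Dom C m \<longrightarrow>
        (\<exists>m' f'. is_pushout C m f m' f' \<and> inflation C E m')) \<and>
     (\<forall>p f. deflation C E p \<and> f \<in> Ar C \<and> Cod C f = Cod C p \<longrightarrow>
        (\<exists>p' f'. is_pullback C p f p' f' \<and> deflation C E p'))"

definition ideal :: "('o,'m) cat \<Rightarrow> 'm set \<Rightarrow> bool" where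
  "ideal C J \<longleftrightarrow> J \<subseteq> Ar C \<and>
     (\<forall>A\<in>Ob C. \<forall>B\<in>Ob C. Zero C A B \<in> J) \<and>
     (\<forall>f\<in>J. \<forall>g\<in>J. Dom C f = Dom C g \<and> Cod C f = Cod C g \<longrightarrow> Add C f g \<in> J) \<and>
     (\<forall>f\<in>J. \<exists>g\<in>J. Dom C g = Dom C f \<and> Cod C g = Cod C f \<and>
        Add C f g = Zero C (Dom C f) (Cod C f)) \<and>
     (\<forall>f\<in>J. \<forall>g\<in>Ar C. Dom C g = Cod C f \<longrightarrow> Cmp C g f \<in> J) \<and>
     (\<forall>f\<in>J. \<forall>h\<in>Ar C. Cod C h = Dom C f \<longrightarrow> Cmp C f h \<in> J)"

definition ideal_sum :: "('o,'m) cat \<Rightarrow> 'm set \<Rightarrow> 'm set \<Rightarrow> 'm set" where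
  "ideal_sum C J1 J2 = {Add C f g | f g. f \<in> J1 \<and> g \<in> J2 \<and> Dom C f = Dom C g \<and> Cod C f = Cod C g}"

definition is_preenvelope :: "('o,'m) cat \<Rightarrow> 'm set \<Rightarrow> 'o \<Rightarrow> 'm \<Rightarrow> bool" where
  "is_preenvelope C J B j \<longleftrightarrow> j \<in> J \<and> Dom C j = B \<and>
     (\<forall>f\<in>J. Dom C f = B \<longrightarrow> (\<exists>g\<in>hom C (Cod C j) (Cod C f). Cmp C g j = f))"

definition is_precover :: "('o,'m) cat \<Rightarrow> 'm set \<Rightarrow> 'o \<Rightarrow> 'm \<Rightarrow> bool" where
  "is_precover C J A i \<longleftrightarrow> i \<in> J \<and> Cod C i = A \<and>
     (\<forall>f\<in>J. Cod C f = A \<longrightarrow> (\<exists>g\<in>hom C (Dom C f) (Dom C i). Cmp C i g = f))"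

definition monic_preenveloping :: "('o,'m) cat \<Rightarrow> ('m \<times> 'm) set \<Rightarrow> 'm set \<Rightarrow> bool" where
  "monic_preenveloping C E J \<longleftrightarrow>
     (\<forall>B\<in>Ob C. \<exists>j. is_preenvelope C J B j \<and> inflation C E j)"

definition epic_precovering :: "('o,'m) cat \<Rightarrow> ('m \<times> 'm) set \<Rightarrow> 'm set \<Rightarrow> bool" where
  "epic_precovering C E J \<longleftrightarrow>
     (\<forall>A\<in>Ob C. \<exists>i. is_precover C J A i \<and> deflation C E i)"

end

theory Submission
  imports Defs
begin

text \<open>Let j1 : B \<rightarrow> X1 and j2 : B \<rightarrow> X2 be inflations that are preenvelopes of B for J1 and J2.
For the intersection, push j1 out along j2: the resulting inflation m' j2 = f' j1 lies in both ideals,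
and a pair g1, g2 with g1 j1 = g2 j2 factors through the pushout.
For the sum, write Q for the coproduct of B and X2, obtained by pushing out an inflation with zero
domain, with coprojections t (an inflation) and e, and push j1 out along s = t - e j2.
The inflation m' t equals f' j1 + m' e j2, and g1 j1 + g2 j2 factors through it: the map
h : Q \<rightarrow> Y with h t = g1 j1 + g2 j2 and h e = g2 satisfies h s = g1 j1, so h and g1 glue
along the pushout. Only j1 needs to be an inflation here.
The statements about precovers are the same statements in the opposite exact category.\<close>

section \<open>Preadditive categories\<close>

lemma hom_Ob: "category C \<Longrightarrow> f \<in> hom C A B \<Longrightarrow> A \<in> Ob C \<and> B \<in> Ob C"
  unfolding category_def hom_def by auto

lemma Cmp_in_hom: "category C \<Longrightarrow> f \<in> hom C A B \<Longrightarrow> g \<in> hom C B D \<Longrightarrow> Cmp C g f \<in> hom C A D"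
  unfolding category_def hom_def by auto

lemma Cmp_assoc:
  "category C \<Longrightarrow> f \<in> hom C A B \<Longrightarrow> g \<in> hom C B D \<Longrightarrow> h \<in> hom C D D'
   \<Longrightarrow> Cmp C h (Cmp C g f) = Cmp C (Cmp C h g) f"
  unfolding category_def hom_def by auto

lemma Idm_in_hom: "category C \<Longrightarrow> A \<in> Ob C \<Longrightarrow> Idm C A \<in> hom C A A"
  unfolding category_def by auto

lemma Cmp_Idm_left: "category C \<Longrightarrow> f \<in> hom C A B \<Longrightarrow> Cmp C (Idm C B) f = f"
  unfolding category_def hom_def by auto

lemma Cmp_Idm_right: "category C \<Longrightarrow> f \<in> hom C A B \<Longrightarrow> Cmp C f (Idm C A) = f"
  unfolding category_def hom_def by auto

lemma preadditive_category: "preadditive C \<Longrightarrow> category C"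
  unfolding preadditive_def by simp

lemma Zero_in_hom: "preadditive C \<Longrightarrow> A \<in> Ob C \<Longrightarrow> B \<in> Ob C \<Longrightarrow> Zero C A B \<in> hom C A B"
  unfolding preadditive_def by blast

context
  fixes C :: "('o, 'm) cat"
  assumes pa: "preadditive C"
begin

private lemma hom_group:
  assumes "f \<in> hom C A B"
  shows "Zero C A B \<in> hom C A B \<and>
        (\<forall>f\<in>hom C A B. \<forall>g\<in>hom C A B. Add C f g \<in> hom C A B) \<and>
        (\<forall>f\<in>hom C A B. \<forall>g\<in>hom C A B. \<forall>h\<in>hom C A B. Add C (Add C f g) h = Add C f (Add C g h)) \<and>
        (\<forall>f\<in>hom C A B. \<forall>g\<in>hom C A B. Add C f g = Add C g f) \<and>
        (\<forall>f\<in>hom C A B. Add C f (Zero C A B) = f) \<and>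
        (\<forall>f\<in>hom C A B. \<exists>g\<in>hom C A B. Add C f g = Zero C A B)"
  using pa hom_Ob[OF preadditive_category[OF pa] assms] unfolding preadditive_def by blast

lemma Add_in_hom: "f \<in> hom C A B \<Longrightarrow> g \<in> hom C A B \<Longrightarrow> Add C f g \<in> hom C A B"
  using hom_group by blast

lemma Add_assoc:
  "f \<in> hom C A B \<Longrightarrow> g \<in> hom C A B \<Longrightarrow> h \<in> hom C A B
   \<Longrightarrow> Add C (Add C f g) h = Add C f (Add C g h)"
  using hom_group by blast

lemma Add_commute: "f \<in> hom C A B \<Longrightarrow> g \<in> hom C A B \<Longrightarrow> Add C f g = Add C g f"
  using hom_group by blast

lemma Add_Zero: "f \<in> hom C A B \<Longrightarrow> Add C f (Zero C A B) = f"
  using hom_group by blast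

lemma Add_inverse_exists: "f \<in> hom C A B \<Longrightarrow> \<exists>g\<in>hom C A B. Add C f g = Zero C A B"
  using hom_group by blast

lemma Cmp_Add_left:
  "f \<in> hom C A B \<Longrightarrow> g \<in> hom C B D \<Longrightarrow> g' \<in> hom C B D
   \<Longrightarrow> Cmp C (Add C g g') f = Add C (Cmp C g f) (Cmp C g' f)"
  using pa hom_Ob[OF preadditive_category[OF pa]] unfolding preadditive_def by meson

lemma Cmp_Add_right:
  "f \<in> hom C A B \<Longrightarrow> f' \<in> hom C A B \<Longrightarrow> g \<in> hom C B D
   \<Longrightarrow> Cmp C g (Add C f f') = Add C (Cmp C g f) (Cmp C g f')"
  using pa hom_Ob[OF preadditive_category[OF pa]] unfolding preadditive_def by meson

lemma Add_right_cancel: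
  assumes x: "x \<in> hom C A B" and y: "y \<in> hom C A B" and z: "z \<in> hom C A B"
    and eq: "Add C x z = Add C y z"
  shows "x = y"
proof -
  obtain n where n: "n \<in> hom C A B" "Add C z n = Zero C A B"
    using Add_inverse_exists[OF z] by blast
  have "x = Add C (Add C x z) n"
    using n Add_Zero[OF x] Add_assoc[OF x z n(1)] by simp
  also have "\<dots> = Add C (Add C y z) n" using eq by simp
  also have "\<dots> = y"
    using n Add_Zero[OF y] Add_assoc[OF y z n(1)] by simp
  finally show ?thesis .
qed

lemma Add_right_solvable:
  assumes f: "f \<in> hom C A B" and g: "g \<in> hom C A B"
  shows "\<exists>h\<in>hom C A B. Add C h g = f"
proof -
  obtain n where n: "n \<in> hom C A B" "Add C g n = Zero C A B"
    using Add_inverse_exists[OF g] by blast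
  have "Add C (Add C f n) g = f"
    using Add_assoc[OF f n(1) g] Add_commute[OF n(1) g] n(2) Add_Zero[OF f] by simp
  then show ?thesis using Add_in_hom[OF f n(1)] by blast
qed

lemma Cmp_Zero:
  assumes f: "f \<in> hom C B D" and A: "A \<in> Ob C"
  shows "Cmp C f (Zero C A B) = Zero C A D"
proof -
  have cat: "category C" using preadditive_category[OF pa] .
  have z: "Zero C A B \<in> hom C A B" using Zero_in_hom[OF pa A] hom_Ob[OF cat f] by blast
  have fz: "Cmp C f (Zero C A B) \<in> hom C A D" using Cmp_in_hom[OF cat z f] .
  have zD: "Zero C A D \<in> hom C A D" using hom_group[OF fz] by blast
  have "Add C (Cmp C f (Zero C A B)) (Cmp C f (Zero C A B)) = Cmp C f (Zero C A B)"
    using Cmp_Add_right[OF z z f] Add_Zero[OF z] by simp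
  also have "\<dots> = Add C (Zero C A D) (Cmp C f (Zero C A B))"
    using Add_Zero[OF fz] Add_commute[OF fz zD] by simp
  finally show ?thesis using Add_right_cancel[OF fz zD fz] by blast
qed

end

section \<open>The opposite exact category\<close>

definition op_cat :: "('o, 'm) cat \<Rightarrow> ('o, 'm) cat" where
  "op_cat C = C\<lparr>Dom := Cod C, Cod := Dom C, Cmp := (\<lambda>g f. Cmp C f g), Zero := (\<lambda>A B. Zero C B A)\<rparr>"

lemma op_cat_simps [simp]:
  "Ob (op_cat C) = Ob C" "Ar (op_cat C) = Ar C" "Dom (op_cat C) = Cod C" "Cod (op_cat C) = Dom C"
  "Cmp (op_cat C) g f = Cmp C f g" "Idm (op_cat C) = Idm C" "Add (op_cat C) = Add C"
  "Zero (op_cat C) A B = Zero C B A"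
  by (simp_all add: op_cat_def)

lemma hom_op_cat [simp]: "hom (op_cat C) A B = hom C B A"
  by (auto simp: hom_def)

lemma category_op_cat: "category C \<Longrightarrow> category (op_cat C)"
  unfolding category_def by (auto simp: hom_def)

lemma preadditive_op_cat: "preadditive C \<Longrightarrow> preadditive (op_cat C)"
  unfolding preadditive_def[of "op_cat C"]
  by (auto simp: category_op_cat preadditive_category Zero_in_hom Add_in_hom Add_assoc Add_Zero
      Add_inverse_exists Cmp_Add_left Cmp_Add_right intro: Add_commute)

lemma is_biproduct_op_cat:
  "is_biproduct (op_cat C) A B P p1 p2 i1 i2 = is_biproduct C A B P i1 i2 p1 p2"
  unfolding is_biproduct_def by auto

lemma additive_op_cat: "additive C \<Longrightarrow> additive (op_cat C)"
  unfolding additive_def by (simp add: preadditive_op_cat) (metis is_biproduct_op_cat)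

lemma is_kernel_op_cat: "is_kernel (op_cat C) m p = is_cokernel C m p"
  unfolding is_kernel_def is_cokernel_def
  by (simp add: eq_commute[of "Dom C m"] conj_left_commute[of "m \<in> Ar C"])

lemma is_cokernel_op_cat: "is_cokernel (op_cat C) p m = is_kernel C p m"
  unfolding is_kernel_def is_cokernel_def
  by (simp add: eq_commute[of "Cod C p"] conj_left_commute[of "m \<in> Ar C"])

lemma kc_pair_op_cat: "kc_pair (op_cat C) m p = kc_pair C p m"
  by (auto simp: kc_pair_def is_kernel_op_cat is_cokernel_op_cat)

lemma iso_op_cat: "iso (op_cat C) f = iso C f"
  unfolding iso_def by auto

lemma is_pushout_op_cat: "is_pushout (op_cat C) m f m' f' = is_pullback C m f m' f'"
  unfolding is_pushout_def is_pullback_def by simp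

lemma is_pullback_op_cat: "is_pullback (op_cat C) p f p' f' = is_pushout C p f p' f'"
  unfolding is_pushout_def is_pullback_def by simp

lemma inflation_op_cat: "inflation (op_cat C) (E\<inverse>) m = deflation C E m"
  by (simp add: inflation_def deflation_def)

lemma deflation_op_cat: "deflation (op_cat C) (E\<inverse>) p = inflation C E p"
  by (simp add: inflation_def deflation_def)

lemma iso_inverse:
  assumes "category C" "iso C a" "a \<in> hom C X Y"
  obtains a' where "a' \<in> hom C Y X" "iso C a'" "Cmp C a' a = Idm C X" "Cmp C a a' = Idm C Y"
proof -
  obtain a' where a': "a' \<in> hom C Y X" "Cmp C a' a = Idm C X" "Cmp C a a' = Idm C Y"
    using assms(2,3) unfolding iso_def hom_def by auto
  moreover have "iso C a'"
    using a' assms(3) unfolding iso_def hom_def by auto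
  ultimately show thesis using that by blast
qed

lemma commuting_square_inverse:
  assumes cat: "category C" and f: "f \<in> hom C X Y" and f': "f' \<in> hom C X' Y'"
    and a: "a \<in> hom C X X'" and a': "a' \<in> hom C X' X" and aa': "Cmp C a a' = Idm C X'"
    and b: "b \<in> hom C Y Y'" and b': "b' \<in> hom C Y' Y" and b'b: "Cmp C b' b = Idm C Y"
    and sq: "Cmp C b f = Cmp C f' a"
  shows "Cmp C b' f' = Cmp C f a'"
proof -
  have "Cmp C b' f' = Cmp C b' (Cmp C f' (Cmp C a a'))"
    using aa' Cmp_Idm_right[OF cat f'] by simp
  also have "\<dots> = Cmp C b' (Cmp C (Cmp C b f) a')"
    using sq Cmp_assoc[OF cat a' a f'] by simp
  also have "\<dots> = Cmp C (Cmp C b' b) (Cmp C f a')"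
    using Cmp_assoc[OF cat a' f b] Cmp_assoc[OF cat _ b b'] Cmp_in_hom[OF cat a' f] by metis
  also have "\<dots> = Cmp C f a'"
    using b'b Cmp_Idm_left[OF cat Cmp_in_hom[OF cat a' f]] by simp
  finally show ?thesis .
qed

lemma kc_pair_hom:
  "kc_pair C m p \<Longrightarrow> m \<in> hom C (Dom C m) (Dom C p) \<and> p \<in> hom C (Dom C p) (Cod C p)"
  unfolding kc_pair_def is_kernel_def hom_def by auto

lemma conflation_iso_closed:
  assumes ec: "exact_category C E" and mp: "(m, p) \<in> E" and kc: "kc_pair C m' p'"
    and "iso C a" "iso C b" "iso C c"
    and "a \<in> hom C (Dom C m) (Dom C m')" "b \<in> hom C (Dom C p) (Dom C p')"
    and "c \<in> hom C (Cod C p) (Cod C p')"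
    and "Cmp C b m = Cmp C m' a" "Cmp C c p = Cmp C p' b"
  shows "(m', p') \<in> E"
proof -
  have "kc_pair C m p" using ec mp unfolding exact_category_def by blast
  then have "Cod C m = Dom C p" "Cod C m' = Dom C p'"
    using kc unfolding kc_pair_def is_kernel_def by simp_all
  with assms show ?thesis
    unfolding exact_category_def by (smt (verit) case_prodD)
qed

text \<open>In the opposite category the comparison isomorphisms between conflations point the
other way; inverting them reduces closure under isomorphism to the axiom in the category itself.\<close>

lemma conflation_iso_closed_reverse:
  assumes ec: "exact_category C E" and mp: "(m, p) \<in> E" and kc: "kc_pair C m' p'"
    and isos: "iso C a" "iso C b" "iso C c"
    and a: "a \<in> hom C (Dom C m') (Dom C m)" and b: "b \<in> hom C (Dom C p') (Dom C p)"
    and c: "c \<in> hom C (Cod C p') (Cod C p)"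
    and sq1: "Cmp C b m' = Cmp C m a" and sq2: "Cmp C c p' = Cmp C p b"
  shows "(m', p') \<in> E"
proof -
  have cat: "category C"
    using ec unfolding exact_category_def additive_def by (simp add: preadditive_category)
  have "kc_pair C m p" using ec mp unfolding exact_category_def by blast
  then have m: "m \<in> hom C (Dom C m) (Dom C p)" and p: "p \<in> hom C (Dom C p) (Cod C p)"
    by (simp_all add: kc_pair_hom)
  from kc have m': "m' \<in> hom C (Dom C m') (Dom C p')" and p': "p' \<in> hom C (Dom C p') (Cod C p')"
    by (simp_all add: kc_pair_hom)
  obtain a' where a': "a' \<in> hom C (Dom C m) (Dom C m')" "iso C a'" "Cmp C a a' = Idm C (Dom C m)"
    using iso_inverse[OF cat isos(1) a] by metis
  obtain b' where b': "b' \<in> hom C (Dom C p) (Dom C p')" "iso C b'"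
      "Cmp C b' b = Idm C (Dom C p')" "Cmp C b b' = Idm C (Dom C p)"
    using iso_inverse[OF cat isos(2) b] by metis
  obtain c' where c': "c' \<in> hom C (Cod C p) (Cod C p')" "iso C c'" "Cmp C c' c = Idm C (Cod C p')"
    using iso_inverse[OF cat isos(3) c] by metis
  have "Cmp C b' m = Cmp C m' a'"
    using commuting_square_inverse[OF cat m' m a a'(1,3) b b'(1,3) sq1] .
  moreover have "Cmp C c' p = Cmp C p' b'"
    using commuting_square_inverse[OF cat p' p b b'(1,4) c c'(1,3) sq2] .
  ultimately show ?thesis
    using conflation_iso_closed[OF ec mp kc a'(2) b'(2) c'(2) a'(1) b'(1) c'(1)] by simp
qed

lemma exact_category_op_cat:
  assumes ec: "exact_category C E"
  shows "exact_category (op_cat C) (E\<inverse>)"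
  using ec conflation_iso_closed_reverse[OF ec] unfolding exact_category_def
  by (simp add: additive_op_cat kc_pair_op_cat iso_op_cat inflation_op_cat deflation_op_cat
      is_pushout_op_cat is_pullback_op_cat split_def) (intro conjI ballI allI impI; force)

lemma ideal_op_cat: "ideal (op_cat C) J = ideal C J"
  unfolding ideal_def by auto

lemma ideal_sum_op_cat: "ideal_sum (op_cat C) J1 J2 = ideal_sum C J1 J2"
  unfolding ideal_sum_def by auto

lemma is_preenvelope_op_cat: "is_preenvelope (op_cat C) J A j = is_precover C J A j"
  unfolding is_preenvelope_def is_precover_def by auto

lemma monic_preenveloping_op_cat:
  "monic_preenveloping (op_cat C) (E\<inverse>) J = epic_precovering C E J"
  unfolding monic_preenveloping_def epic_precovering_def
  by (simp add: is_preenvelope_op_cat inflation_op_cat)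

section \<open>Preenvelopes for intersections and sums of ideals\<close>

lemma ideal_subset_Ar: "ideal C J \<Longrightarrow> J \<subseteq> Ar C"
  unfolding ideal_def by blast

lemma ideal_Cmp_left: "ideal C J \<Longrightarrow> f \<in> J \<Longrightarrow> f \<in> hom C A B \<Longrightarrow> g \<in> hom C B D \<Longrightarrow> Cmp C g f \<in> J"
  unfolding ideal_def hom_def by blast

lemma ideal_sumI:
  "f1 \<in> J1 \<Longrightarrow> f2 \<in> J2 \<Longrightarrow> f1 \<in> hom C A B \<Longrightarrow> f2 \<in> hom C A B \<Longrightarrow> Add C f1 f2 \<in> ideal_sum C J1 J2"
  unfolding ideal_sum_def hom_def mem_Collect_eq by metis

lemma ideal_sumE:
  assumes "preadditive C" "ideal C J1" "ideal C J2" "f \<in> ideal_sum C J1 J2"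
  obtains f1 f2 where "f1 \<in> J1" "f2 \<in> J2" "f1 \<in> hom C (Dom C f) (Cod C f)"
    "f2 \<in> hom C (Dom C f) (Cod C f)" "f = Add C f1 f2"
proof -
  obtain f1 f2 where f: "f = Add C f1 f2" "f1 \<in> J1" "f2 \<in> J2"
    and f12: "f1 \<in> hom C (Dom C f1) (Cod C f1)" "f2 \<in> hom C (Dom C f1) (Cod C f1)"
    using assms(2-4) ideal_subset_Ar unfolding ideal_sum_def hom_def by fastforce
  then have "f \<in> hom C (Dom C f1) (Cod C f1)" using Add_in_hom[OF assms(1)] by simp
  then show thesis using that f f12 unfolding hom_def by simp
qed

lemma is_preenvelope_hom:
  "ideal C J \<Longrightarrow> is_preenvelope C J B j \<Longrightarrow> j \<in> hom C B (Cod C j)"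
  unfolding is_preenvelope_def hom_def using ideal_subset_Ar by blast

lemma is_pushout_hom:
  assumes "is_pushout C m f m' f'" "m \<in> hom C B X" "f \<in> hom C B B'"
  shows "m' \<in> hom C B' (Cod C f')" "f' \<in> hom C X (Cod C f')" "Cmp C f' m = Cmp C m' f"
  using assms unfolding is_pushout_def hom_def by auto

lemma is_pushout_factor:
  assumes po: "is_pushout C m f m' f'"
    and g: "g \<in> hom C (Cod C m) Y" and h: "h \<in> hom C (Cod C f) Y" and sq: "Cmp C g m = Cmp C h f"
  shows "\<exists>u\<in>hom C (Cod C f') Y. Cmp C u f' = g \<and> Cmp C u m' = h"
proof -
  have univ: "\<forall>g\<in>Ar C. \<forall>h\<in>Ar C. Dom C g = Cod C m \<and> Dom C h = Cod C f \<and> Cod C g = Cod C h \<and>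
      Cmp C g m = Cmp C h f \<longrightarrow>
      (\<exists>!u. u \<in> hom C (Cod C f') (Cod C g) \<and> Cmp C u f' = g \<and> Cmp C u m' = h)"
    using po unfolding is_pushout_def by blast
  have "\<exists>!u. u \<in> hom C (Cod C f') Y \<and> Cmp C u f' = g \<and> Cmp C u m' = h"
    using univ[rule_format, of g h] g h sq unfolding hom_def by auto
  then show ?thesis by (auto dest: ex1_implies_ex)
qed

context
  fixes C :: "('o, 'm) cat" and E :: "('m \<times> 'm) set"
  assumes ec: "exact_category C E"
begin

lemma exact_category_preadditive: "preadditive C"
  using ec unfolding exact_category_def additive_def by simp

lemma exact_category_category: "category C"
  using preadditive_category[OF exact_category_preadditive] .

lemma inflation_Cmp:
  "inflation C E m \<Longrightarrow> inflation C E n \<Longrightarrow> Cod C m = Dom C n \<Longrightarrow> inflation C E (Cmp C n m)"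
  using ec unfolding exact_category_def by blast

lemma inflation_pushout_exists:
  "inflation C E m \<Longrightarrow> m \<in> hom C B X \<Longrightarrow> f \<in> hom C B B'
   \<Longrightarrow> \<exists>m' f'. is_pushout C m f m' f' \<and> inflation C E m'"
  using ec unfolding exact_category_def hom_def by blast

lemma inflation_from_zero_object:
  assumes X: "X \<in> Ob C"
  obtains m K where "m \<in> hom C K X" "inflation C E m" "\<And>Y h. h \<in> hom C K Y \<Longrightarrow> h = Zero C K Y"
proof -
  have pa: "preadditive C" and cat: "category C"
    by (rule exact_category_preadditive, rule exact_category_category)
  obtain m where mE: "(m, Idm C X) \<in> E"
    using ec X unfolding exact_category_def deflation_def by blast
  then have ker: "is_kernel C m (Idm C X)"
    using ec unfolding exact_category_def kc_pair_def by blast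
  define K where "K = Dom C m"
  have idX: "Idm C X \<in> hom C X X" using Idm_in_hom[OF cat X] .
  then have m: "m \<in> hom C K X" and m0: "Cmp C (Idm C X) m = Zero C K X"
    and univ: "\<exists>!g. g \<in> hom C K K \<and> Cmp C m g = m"
    using ker unfolding is_kernel_def K_def hom_def by auto
  have K: "K \<in> Ob C" using hom_Ob[OF cat m] by blast
  \<comment> \<open>m is a kernel of an identity, hence zero, so Idm K and Zero K K both factor m through m.\<close>
  have "Cmp C m (Zero C K K) = m"
    using Cmp_Zero[OF pa m K] m0 Cmp_Idm_left[OF cat m] by simp
  then have idK: "Idm C K = Zero C K K"
    using univ Idm_in_hom[OF cat K] Cmp_Idm_right[OF cat m] Zero_in_hom[OF pa K K] by blast
  have "h = Zero C K Y" if h: "h \<in> hom C K Y" for Y h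
    using Cmp_Idm_right[OF cat h] Cmp_Zero[OF pa h K] idK by simp
  then show thesis using that m ec mE unfolding inflation_def by blast
qed

lemma coproduct_inflation:
  assumes B: "B \<in> Ob C" and X: "X \<in> Ob C"
  obtains Q t e where "t \<in> hom C B Q" "inflation C E t" "e \<in> hom C X Q"
    "\<And>Y h g. h \<in> hom C B Y \<Longrightarrow> g \<in> hom C X Y \<Longrightarrow> \<exists>u\<in>hom C Q Y. Cmp C u t = h \<and> Cmp C u e = g"
proof -
  have pa: "preadditive C" and cat: "category C"
    by (rule exact_category_preadditive, rule exact_category_category)
  obtain K m where m: "m \<in> hom C K X" "inflation C E m"
    and K0: "\<And>Y h. h \<in> hom C K Y \<Longrightarrow> h = Zero C K Y"
    using inflation_from_zero_object[OF X] by metis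
  have z: "Zero C K B \<in> hom C K B"
    using Zero_in_hom[OF pa _ B] hom_Ob[OF cat m(1)] by blast
  obtain t e where po: "is_pushout C m (Zero C K B) t e" and infl: "inflation C E t"
    using inflation_pushout_exists[OF m(2,1) z] by blast
  define Q where "Q = Cod C e"
  have t: "t \<in> hom C B Q" and e: "e \<in> hom C X Q"
    using is_pushout_hom[OF po m(1) z] unfolding Q_def by simp_all
  show thesis
  proof (rule that[OF t infl e])
    fix Y h g assume h: "h \<in> hom C B Y" and g: "g \<in> hom C X Y"
    have "Cmp C g m = Cmp C h (Zero C K B)"
      using K0[OF Cmp_in_hom[OF cat m(1) g]] K0[OF Cmp_in_hom[OF cat z h]] by simp
    moreover have "Cod C m = X" "Cod C (Zero C K B) = B"
      using m(1) z unfolding hom_def by simp_all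
    ultimately show "\<exists>u\<in>hom C Q Y. Cmp C u t = h \<and> Cmp C u e = g"
      using is_pushout_factor[OF po, of g Y h] g h unfolding Q_def by auto
  qed
qed

lemma inflation_preenvelope_inter:
  assumes J1: "ideal C J1" and J2: "ideal C J2"
    and j1: "is_preenvelope C J1 B j1" "inflation C E j1"
    and j2: "is_preenvelope C J2 B j2" "inflation C E j2"
  shows "\<exists>j. is_preenvelope C (J1 \<inter> J2) B j \<and> inflation C E j"
proof -
  have cat: "category C" by (rule exact_category_category)
  have j1h: "j1 \<in> hom C B (Cod C j1)" and j2h: "j2 \<in> hom C B (Cod C j2)"
    by (rule is_preenvelope_hom[OF J1 j1(1)], rule is_preenvelope_hom[OF J2 j2(1)])
  obtain m' f' where po: "is_pushout C j1 j2 m' f'" and "inflation C E m'"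
    using inflation_pushout_exists[OF j1(2) j1h j2h] by blast
  note po_hom = is_pushout_hom[OF po j1h j2h]
  define j where "j = Cmp C m' j2"
  have "inflation C E j"
    using inflation_Cmp[OF j2(2) \<open>inflation C E m'\<close>] po_hom(1) unfolding j_def hom_def by simp
  moreover have "j \<in> J1"
    using ideal_Cmp_left[OF J1 _ j1h po_hom(2)] j1(1) po_hom(3) unfolding j_def is_preenvelope_def by simp
  moreover have "j \<in> J2"
    using ideal_Cmp_left[OF J2 _ j2h po_hom(1)] j2(1) unfolding j_def is_preenvelope_def by simp
  moreover have jh: "j \<in> hom C B (Cod C f')"
    using Cmp_in_hom[OF cat j2h po_hom(1)] unfolding j_def .
  moreover have "\<exists>u\<in>hom C (Cod C j) (Cod C f). Cmp C u j = f"
    if f: "f \<in> J1 \<inter> J2" "Dom C f = B" for f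
  proof -
    obtain g1 where g1: "g1 \<in> hom C (Cod C j1) (Cod C f)" "Cmp C g1 j1 = f"
      using j1(1) f unfolding is_preenvelope_def by blast
    obtain g2 where g2: "g2 \<in> hom C (Cod C j2) (Cod C f)" "Cmp C g2 j2 = f"
      using j2(1) f unfolding is_preenvelope_def by blast
    obtain u where u: "u \<in> hom C (Cod C f') (Cod C f)" "Cmp C u m' = g2"
      using is_pushout_factor[OF po g1(1) g2(1)] g1(2) g2(2) by auto
    have "Cmp C u j = f"
      using Cmp_assoc[OF cat j2h po_hom(1) u(1)] u(2) g2(2) unfolding j_def by simp
    then show ?thesis using u(1) jh unfolding hom_def by auto
  qed
  ultimately show ?thesis unfolding is_preenvelope_def hom_def by auto
qed

lemma inflation_preenvelope_sum:
  assumes J1: "ideal C J1" and J2: "ideal C J2"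
    and j1: "is_preenvelope C J1 B j1" "inflation C E j1"
    and j2: "is_preenvelope C J2 B j2"
  shows "\<exists>j. is_preenvelope C (ideal_sum C J1 J2) B j \<and> inflation C E j"
proof -
  have pa: "preadditive C" and cat: "category C"
    by (rule exact_category_preadditive, rule exact_category_category)
  define X1 X2 where "X1 = Cod C j1" and "X2 = Cod C j2"
  have j1h: "j1 \<in> hom C B X1" and j2h: "j2 \<in> hom C B X2" unfolding X1_def X2_def
    by (rule is_preenvelope_hom[OF J1 j1(1)], rule is_preenvelope_hom[OF J2 j2(1)])
  obtain Q t e where t: "t \<in> hom C B Q" "inflation C E t" and e: "e \<in> hom C X2 Q"
    and copr: "\<And>Y h g. h \<in> hom C B Y \<Longrightarrow> g \<in> hom C X2 Y
                 \<Longrightarrow> \<exists>u\<in>hom C Q Y. Cmp C u t = h \<and> Cmp C u e = g"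
    using coproduct_inflation hom_Ob[OF cat j2h] by metis
  have ej2: "Cmp C e j2 \<in> hom C B Q" using Cmp_in_hom[OF cat j2h e] .
  obtain s where s: "s \<in> hom C B Q" "Add C s (Cmp C e j2) = t"
    using Add_right_solvable[OF pa t(1) ej2] by blast
  obtain m' f' where po: "is_pushout C j1 s m' f'" and "inflation C E m'"
    using inflation_pushout_exists[OF j1(2) j1h s(1)] by blast
  define P where "P = Cod C f'"
  have m': "m' \<in> hom C Q P" and f': "f' \<in> hom C X1 P" and sq: "Cmp C f' j1 = Cmp C m' s"
    using is_pushout_hom[OF po j1h s(1)] unfolding P_def by simp_all
  define j where "j = Cmp C m' t"
  have jh: "j \<in> hom C B P" using Cmp_in_hom[OF cat t(1) m'] unfolding j_def .
  have "inflation C E j"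
    using inflation_Cmp[OF t(2) \<open>inflation C E m'\<close>] t(1) m' unfolding j_def hom_def by simp
  moreover have "j = Add C (Cmp C f' j1) (Cmp C (Cmp C m' e) j2)"
  proof -
    have "j = Add C (Cmp C m' s) (Cmp C m' (Cmp C e j2))"
      using Cmp_Add_right[OF pa s(1) ej2 m'] s(2) unfolding j_def by simp
    then show ?thesis using sq Cmp_assoc[OF cat j2h e m'] by simp
  qed
  then have "j \<in> ideal_sum C J1 J2"
    using ideal_sumI ideal_Cmp_left[OF J1 _ j1h f'] ideal_Cmp_left[OF J2 _ j2h Cmp_in_hom[OF cat e m']]
      Cmp_in_hom[OF cat j1h f'] Cmp_in_hom[OF cat j2h Cmp_in_hom[OF cat e m']] j1(1) j2(1)
    unfolding is_preenvelope_def by metis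
  moreover have "\<exists>u\<in>hom C (Cod C j) (Cod C f). Cmp C u j = f"
    if f: "f \<in> ideal_sum C J1 J2" "Dom C f = B" for f
  proof -
    define Y where "Y = Cod C f"
    obtain f1 f2 where f1: "f1 \<in> J1" "f1 \<in> hom C B Y" and f2: "f2 \<in> J2" "f2 \<in> hom C B Y"
      and f12: "f = Add C f1 f2"
      using ideal_sumE[OF pa J1 J2 f(1)] f(2) unfolding Y_def by metis
    obtain g1 where g1: "g1 \<in> hom C X1 Y" "Cmp C g1 j1 = f1"
      using j1(1) f1 unfolding is_preenvelope_def X1_def hom_def by auto
    obtain g2 where g2: "g2 \<in> hom C X2 Y" "Cmp C g2 j2 = f2"
      using j2(1) f2 unfolding is_preenvelope_def X2_def hom_def by auto
    obtain h where h: "h \<in> hom C Q Y" "Cmp C h t = f" "Cmp C h e = g2"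
      using copr[OF _ g2(1), of f] f12 Add_in_hom[OF pa f1(2) f2(2)] by auto
    have "Add C (Cmp C h s) f2 = Add C f1 f2"
      using Cmp_Add_right[OF pa s(1) ej2 h(1)] Cmp_assoc[OF cat j2h e h(1)] s(2) h(2,3) g2(2) f12
      by simp
    then have "Cmp C h s = f1"
      using Add_right_cancel[OF pa Cmp_in_hom[OF cat s(1) h(1)] f1(2) f2(2)] by blast
    then obtain u where u: "u \<in> hom C P Y" "Cmp C u m' = h"
      using is_pushout_factor[OF po, of g1 Y h] g1 h(1) j1h s(1) unfolding P_def X1_def hom_def
      by auto
    have "Cmp C u j = f"
      using Cmp_assoc[OF cat t(1) m' u(1)] u(2) h(2) unfolding j_def by simp
    then show ?thesis using u(1) jh unfolding Y_def hom_def by auto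
  qed
  ultimately show ?thesis using jh unfolding is_preenvelope_def hom_def by auto
qed

lemma monic_preenveloping_inter:
  "\<lbrakk>ideal C J1; ideal C J2; monic_preenveloping C E J1; monic_preenveloping C E J2\<rbrakk>
   \<Longrightarrow> monic_preenveloping C E (J1 \<inter> J2)"
  unfolding monic_preenveloping_def using inflation_preenvelope_inter by metis

lemma monic_preenveloping_sum:
  "\<lbrakk>ideal C J1; ideal C J2; monic_preenveloping C E J1; monic_preenveloping C E J2\<rbrakk>
   \<Longrightarrow> monic_preenveloping C E (ideal_sum C J1 J2)"
  unfolding monic_preenveloping_def using inflation_preenvelope_sum by metis

end

lemma epic_precovering_inter:
  assumes "exact_category C E" "ideal C J1" "ideal C J2" "epic_precovering C E J1" "epic_precovering C E J2"
  shows "epic_precovering C E (J1 \<inter> J2)"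
  using monic_preenveloping_inter[OF exact_category_op_cat] assms
  by (simp add: ideal_op_cat monic_preenveloping_op_cat)

lemma epic_precovering_sum:
  assumes "exact_category C E" "ideal C J1" "ideal C J2" "epic_precovering C E J1" "epic_precovering C E J2"
  shows "epic_precovering C E (ideal_sum C J1 J2)"
  using monic_preenveloping_sum[OF exact_category_op_cat] assms
  by (simp add: ideal_op_cat ideal_sum_op_cat monic_preenveloping_op_cat)

theorem proposition2p2:
  fixes C :: "('o, 'm) cat" and E :: "('m \<times> 'm) set" and J1 J2 :: "'m set"
  assumes "exact_category C E" and "ideal C J1" and "ideal C J2"
  shows "(monic_preenveloping C E J1 \<and> monic_preenveloping C E J2 \<longrightarrow>
            monic_preenveloping C E (J1 \<inter> J2) \<and> monic_preenveloping C E (ideal_sum C J1 J2)) \<and>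
         (epic_precovering C E J1 \<and> epic_precovering C E J2 \<longrightarrow>
            epic_precovering C E (J1 \<inter> J2) \<and> epic_precovering C E (ideal_sum C J1 J2))"
  using monic_preenveloping_inter[OF assms] monic_preenveloping_sum[OF assms]
    epic_precovering_inter[OF assms] epic_precovering_sum[OF assms] by blast

end
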